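(* In any $\{K_3,K_4\}$-decomposition of $K_{18}$ with $\alpha=13$, there are $7$ distinct vertices $w_1,\dots,w_7$ with $\alpha_{w_i}=4$ for all $i\in\{1,\dots,7\}$, and at least two of the copies of $K_3$ in the decomposition have all three of their vertices in $\{w_1,\dots,w_7\}$.
   Context: A $\{K_3,K_4\}$-decomposition of $K_v$ is a collection of subgraphs, each isomorphic to $K_3$ or $K_4$ (triples and quadruples), such that every edge of $K_v$ lies in exactly one of them. $\alpha$ is the number of copies of $K_3$ in the decomposition, and for a vertex $x$, $\alpha_x$ is the number of copies of $K_3$ in the decomposition containing $x$. *)

theory Defs
  imports Main
begin

text \<open>A copy of K3 or K4 inside the complete graph K_v on vertex set V is determined by its
  vertex set (a 3- or 4-element subset of V); its edges are all 2-subsets of that set.\<close>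

definition K34_decomposition :: "'a set \<Rightarrow> 'a set set \<Rightarrow> bool" where
  "K34_decomposition V D \<longleftrightarrow>
     (\<forall>B\<in>D. B \<subseteq> V \<and> (card B = 3 \<or> card B = 4)) \<and>
     (\<forall>x\<in>V. \<forall>y\<in>V. x \<noteq> y \<longrightarrow> (\<exists>!B. B \<in> D \<and> x \<in> B \<and> y \<in> B))"

definition triples :: "'a set set \<Rightarrow> 'a set set" where
  "triples D = {B \<in> D. card B = 3}"

definition alpha :: "'a set set \<Rightarrow> nat" where
  "alpha D = card (triples D)"

definition alpha_at :: "'a set set \<Rightarrow> 'a \<Rightarrow> nat" where
  "alpha_at D x = card {B \<in> triples D. x \<in> B}"

end

theory Submission
  imports Defs
begin

text \<open>Counting the edges at a vertex x of K_18 gives 2 alpha_x + 3 beta_x = 17, where beta_x is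
  the number of quadruples through x, so alpha_x is 1, 4 or 7; double counting gives that the
  alpha_x sum to 3 alpha = 39, i.e. the numbers alpha_x - 1 sum to 21.
  A vertex x with alpha_x = 7 is impossible: the other vertices y with alpha_y > 1 form a set F
  whose values alpha_y - 1 \<ge> 3 sum to 15, so F has at most five elements, and since y lies in
  at most one triple with x, F meets the six triples avoiding x at least 15 times. As two
  triples share at most one vertex, a triple meeting F in k points uses up k choose 2 of the
  at most 10 pairs in F; with 2k \<le> (k choose 2) + 3 for k \<le> 3 this gives 30 \<le> 10 + 18.
  Hence exactly seven vertices have alpha_x = 4 and the others alpha_x = 1; these seven vertices
  have 28 incidences with the 13 triples, more than the 26 possible if at most one triple
  lay inside them.\<close>

definition linear_hypergraph :: "'a set set \<Rightarrow> bool" where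
  "linear_hypergraph T \<longleftrightarrow>
     (\<forall>s\<in>T. \<forall>t\<in>T. \<forall>u v. u \<noteq> v \<and> {u, v} \<subseteq> s \<and> {u, v} \<subseteq> t \<longrightarrow> s = t)"

lemma linear_hypergraph_subset:
  "linear_hypergraph T \<Longrightarrow> S \<subseteq> T \<Longrightarrow> linear_hypergraph S"
  unfolding linear_hypergraph_def by blast

lemma linear_hypergraphD:
  "linear_hypergraph T \<Longrightarrow> s \<in> T \<Longrightarrow> t \<in> T \<Longrightarrow> u \<noteq> v \<Longrightarrow> {u, v} \<subseteq> s \<Longrightarrow> {u, v} \<subseteq> t
    \<Longrightarrow> s = t"
  unfolding linear_hypergraph_def by blast

lemma sum_card_containing_eq_sum_card_Int:
  assumes "finite S" "finite T"
  shows "(\<Sum>v\<in>S. card {t\<in>T. v \<in> t}) = (\<Sum>t\<in>T. card (t \<inter> S))"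
  by (rule sum_multicount_gen[OF assms]) (auto simp: Int_def conj_commute)

lemma card_containing_le_Suc_avoiding:
  assumes "linear_hypergraph T" "finite T" "x \<noteq> y"
  shows "card {t\<in>T. y \<in> t} \<le> card {t\<in>T. y \<in> t \<and> x \<notin> t} + 1"
proof -
  have "card {t\<in>T. y \<in> t \<and> x \<in> t} \<le> 1"
    using assms by (auto simp: card_le_Suc0_iff_eq dest: linear_hypergraphD)
  moreover have "card {t\<in>T. y \<in> t}
      \<le> card {t\<in>T. y \<in> t \<and> x \<notin> t} + card {t\<in>T. y \<in> t \<and> x \<in> t}"
    by (rule order_trans[OF card_mono card_Un_le]) (use assms(2) in auto)
  ultimately show ?thesis by linarith
qed

lemma sum_choose_two_card_Int_le:
  assumes "linear_hypergraph T" "finite T" "finite F"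
  shows "(\<Sum>t\<in>T. card (t \<inter> F) choose 2) \<le> card F choose 2"
proof -
  define pairs where "pairs A = {e. e \<subseteq> A \<and> card e = 2}" for A :: "'a set"
  have pairs_disjoint: "pairs (s \<inter> F) \<inter> pairs (t \<inter> F) = {}" if "s \<in> T" "t \<in> T" "s \<noteq> t" for s t
    using that linear_hypergraphD[OF assms(1)] by (fastforce simp: pairs_def card_2_iff)
  have card_pairs: "card (pairs A) = card A choose 2" if "finite A" for A
    using that unfolding pairs_def by (rule n_subsets)
  have "(\<Sum>t\<in>T. card (t \<inter> F) choose 2) = (\<Sum>t\<in>T. card (pairs (t \<inter> F)))"
    using assms(3) by (simp add: card_pairs)
  also have "\<dots> = card (\<Union>t\<in>T. pairs (t \<inter> F))"
    using assms(2,3) pairs_disjoint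
    by (intro card_UN_disjoint[symmetric]) (auto simp: pairs_def intro: finite_subset[of _ "Pow F"])
  also have "\<dots> \<le> card (pairs F)"
    using assms(3) by (intro card_mono) (auto simp: pairs_def)
  also have "\<dots> = card F choose 2"
    using assms(3) by (rule card_pairs)
  finally show ?thesis .
qed

lemma linear_triples_incidence_bound:
  assumes "linear_hypergraph T" "finite T" "finite F" "\<forall>t\<in>T. card t = 3"
  shows "2 * (\<Sum>t\<in>T. card (t \<inter> F)) \<le> (card F choose 2) + 3 * card T"
proof -
  have pointwise: "2 * card (t \<inter> F) \<le> (card (t \<inter> F) choose 2) + 3" if "t \<in> T" for t
  proof -
    have "card (t \<inter> F) \<le> 3"
      using assms(4) that card_mono[of t "t \<inter> F"] card.infinite by fastforce
    then have "card (t \<inter> F) \<in> {0, 1, 2, 3}" by auto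
    then show ?thesis by (auto simp: numeral_eq_Suc)
  qed
  have "2 * (\<Sum>t\<in>T. card (t \<inter> F)) = (\<Sum>t\<in>T. 2 * card (t \<inter> F))"
    by (simp add: sum_distrib_left)
  also have "\<dots> \<le> (\<Sum>t\<in>T. (card (t \<inter> F) choose 2) + 3)"
    using pointwise by (rule sum_mono)
  also have "\<dots> = (\<Sum>t\<in>T. card (t \<inter> F) choose 2) + 3 * card T"
    by (simp add: sum.distrib)
  also have "\<dots> \<le> (card F choose 2) + 3 * card T"
    using sum_choose_two_card_Int_le[OF assms(1-3)] by simp
  finally show ?thesis .
qed

lemma sum_card_Int_triples_le:
  assumes "finite T" "\<forall>t\<in>T. card t = 3"
  shows "(\<Sum>t\<in>T. card (t \<inter> W)) \<le> 2 * card T + card {t\<in>T. t \<subseteq> W}"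
proof -
  have "card (t \<inter> W) \<le> 2 + (if t \<subseteq> W then 1 else 0)" if "t \<in> T" for t
  proof -
    have "finite t" "card t = 3" using assms(2) that card.infinite by fastforce+
    show ?thesis
    proof (cases "t \<subseteq> W")
      case True
      then show ?thesis using \<open>card t = 3\<close> by (simp add: Int_absorb2)
    next
      case False
      then have "card (t \<inter> W) < card t" using \<open>finite t\<close> by (intro psubset_card_mono) auto
      then show ?thesis using False \<open>card t = 3\<close> by simp
    qed
  qed
  then have "(\<Sum>t\<in>T. card (t \<inter> W)) \<le> (\<Sum>t\<in>T. 2 + (if t \<subseteq> W then 1 else 0))"
    by (rule sum_mono)
  also have "\<dots> = 2 * card T + card {t\<in>T. t \<subseteq> W}"
    using assms(1) by (simp only: sum.distrib) (simp add: sum.If_cases Int_def)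
  finally show ?thesis .
qed

lemma sum_alpha_at_eq_sum_card_Int:
  assumes "finite D" "finite S"
  shows "(\<Sum>x\<in>S. alpha_at D x) = (\<Sum>t\<in>triples D. card (t \<inter> S))"
proof -
  have "finite (triples D)" using assms(1) by (simp add: triples_def)
  then show ?thesis
    unfolding alpha_at_def by (rule sum_card_containing_eq_sum_card_Int[OF assms(2)])
qed

lemma K34_decomposition_linear: "K34_decomposition V D \<Longrightarrow> linear_hypergraph D"
  unfolding K34_decomposition_def linear_hypergraph_def by (metis insert_subset subsetD)

lemma K34_decomposition_finite: "finite V \<Longrightarrow> K34_decomposition V D \<Longrightarrow> finite D"
  unfolding K34_decomposition_def by (meson PowI finite_Pow_iff finite_subset subsetI)

lemma K34_decomposition_degree:
  assumes K: "K34_decomposition V D" and "finite V" "x \<in> V"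
  shows "(\<Sum>B\<in>{B\<in>D. x \<in> B}. card B - 1) = card V - 1"
proof -
  have sub: "B \<subseteq> V" if "B \<in> D" for B
    using K that unfolding K34_decomposition_def by blast
  have "V - {x} = (\<Union>B\<in>{B\<in>D. x \<in> B}. B - {x})"
    using K \<open>x \<in> V\<close> sub unfolding K34_decomposition_def by blast
  then have "card (V - {x}) = card (\<Union>B\<in>{B\<in>D. x \<in> B}. B - {x})"
    by simp
  also have "\<dots> = (\<Sum>B\<in>{B\<in>D. x \<in> B}. card (B - {x}))"
  proof (rule card_UN_disjoint)
    show "finite {B\<in>D. x \<in> B}" using K34_decomposition_finite[OF assms(2) K] by simp
    show "\<forall>B\<in>{B\<in>D. x \<in> B}. finite (B - {x})"
      using sub \<open>finite V\<close> finite_subset by blast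
    show "\<forall>B\<in>{B\<in>D. x \<in> B}. \<forall>B'\<in>{B\<in>D. x \<in> B}.
        B \<noteq> B' \<longrightarrow> (B - {x}) \<inter> (B' - {x}) = {}"
      using linear_hypergraphD[OF K34_decomposition_linear[OF K]] by blast
  qed
  finally show ?thesis using \<open>x \<in> V\<close> \<open>finite V\<close> by simp
qed

lemma K34_decomposition_alpha_at:
  assumes K: "K34_decomposition V D" and "finite V" "x \<in> V"
  shows "2 * alpha_at D x + 3 * card {B\<in>D. x \<in> B \<and> card B = 4} = card V - 1"
proof -
  let ?A = "{B\<in>D. x \<in> B \<and> card B = 3}" and ?C = "{B\<in>D. x \<in> B \<and> card B = 4}"
  have fD: "finite D" using K34_decomposition_finite[OF assms(2) K] .
  have "{B\<in>D. x \<in> B} = ?A \<union> ?C" using K unfolding K34_decomposition_def by blast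
  then have "card V - 1 = (\<Sum>B\<in>?A \<union> ?C. card B - 1)"
    using K34_decomposition_degree[OF assms] by simp
  also have "\<dots> = (\<Sum>B\<in>?A. card B - 1) + (\<Sum>B\<in>?C. card B - 1)"
    using fD by (intro sum.union_disjoint) auto
  also have "\<dots> = 2 * card ?A + 3 * card ?C" by simp
  also have "?A = {B \<in> triples D. x \<in> B}" unfolding triples_def by blast
  finally show ?thesis unfolding alpha_at_def by simp
qed

lemma K34_decomposition_sum_alpha_at:
  assumes K: "K34_decomposition V D" and "finite V"
  shows "(\<Sum>x\<in>V. alpha_at D x) = 3 * alpha D"
proof -
  have "(\<Sum>x\<in>V. alpha_at D x) = (\<Sum>t\<in>triples D. card (t \<inter> V))"
    using sum_alpha_at_eq_sum_card_Int K34_decomposition_finite assms by blast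
  also have "\<dots> = (\<Sum>t\<in>triples D. 3)"
    using K by (intro sum.cong) (auto simp: triples_def K34_decomposition_def Int_absorb2)
  finally show ?thesis by (simp add: alpha_def)
qed

locale K34_decomposition_18_13 =
  fixes V :: "'a set" and D :: "'a set set"
  assumes finite_V: "finite V" and card_V: "card V = 18"
    and decomposition: "K34_decomposition V D" and alpha_D: "alpha D = 13"
begin

lemma finite_D: "finite D"
  using K34_decomposition_finite[OF finite_V decomposition] .

lemma finite_triples: "finite (triples D)"
  using finite_D by (simp add: triples_def)

lemma card_triple: "\<forall>t\<in>triples D. card t = 3"
  by (simp add: triples_def)

lemma linear_triples: "linear_hypergraph (triples D)"
  by (rule linear_hypergraph_subset[OF K34_decomposition_linear[OF decomposition]])
    (auto simp: triples_def)

lemma alpha_at_cases: "x \<in> V \<Longrightarrow> alpha_at D x \<in> {1, 4, 7}"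
  using K34_decomposition_alpha_at[OF decomposition finite_V, of x] card_V by auto presburger

lemma sum_alpha_at_minus_one: "(\<Sum>x\<in>V. alpha_at D x - 1) = 21"
proof -
  have "(\<Sum>x\<in>V. alpha_at D x - 1) = (\<Sum>x\<in>V. alpha_at D x) - card V"
    using alpha_at_cases by (subst sum_subtractf_nat) fastforce+
  then show ?thesis
    using K34_decomposition_sum_alpha_at[OF decomposition finite_V] alpha_D card_V by simp
qed

lemma alpha_at_ne_7:
  assumes "x \<in> V" shows "alpha_at D x \<noteq> 7"
proof
  assume ax: "alpha_at D x = 7"
  define F where "F = {y\<in>V. y \<noteq> x \<and> alpha_at D y \<noteq> 1}"
  define T where "T = {t\<in>triples D. x \<notin> t}"
  have fF: "finite F" and fT: "finite T"
    using finite_V finite_triples by (simp_all add: F_def T_def)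
  have "T = triples D - {t\<in>triples D. x \<in> t}" unfolding T_def by blast
  then have card_T: "card T = 6"
    using ax alpha_D finite_triples by (simp add: card_Diff_subset alpha_def alpha_at_def)
  have "(\<Sum>y\<in>V. alpha_at D y - 1) = (\<Sum>y\<in>insert x F. alpha_at D y - 1)"
    using \<open>x \<in> V\<close> by (intro sum.mono_neutral_right[OF finite_V]) (auto simp: F_def)
  then have sum_F: "(\<Sum>y\<in>F. alpha_at D y - 1) = 15"
    using sum_alpha_at_minus_one ax fF by (simp add: F_def)
  have "card F * 3 \<le> (\<Sum>y\<in>F. alpha_at D y - 1)"
    using sum_bounded_below[of F 3 "\<lambda>y. alpha_at D y - 1"] alpha_at_cases
    by (fastforce simp: F_def)
  then have "card F choose 2 \<le> 5 choose 2"
    using sum_F by (intro binomial_right_mono) simp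
  then have pairs_F: "card F choose 2 \<le> 10"
    by (simp add: numeral_eq_Suc)
  have "alpha_at D y - 1 \<le> card {t\<in>T. y \<in> t}" if "y \<in> F" for y
  proof -
    have "x \<noteq> y" using that unfolding F_def by blast
    then have "card {t\<in>triples D. y \<in> t} \<le> card {t\<in>triples D. y \<in> t \<and> x \<notin> t} + 1"
      by (rule card_containing_le_Suc_avoiding[OF linear_triples finite_triples])
    also have "{t\<in>triples D. y \<in> t \<and> x \<notin> t} = {t\<in>T. y \<in> t}" by (auto simp: T_def)
    finally show ?thesis unfolding alpha_at_def by simp
  qed
  then have "(\<Sum>y\<in>F. alpha_at D y - 1) \<le> (\<Sum>y\<in>F. card {t\<in>T. y \<in> t})"
    by (rule sum_mono)
  then have "15 \<le> (\<Sum>t\<in>T. card (t \<inter> F))"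
    using sum_F sum_card_containing_eq_sum_card_Int[OF fF fT] by simp
  moreover have "2 * (\<Sum>t\<in>T. card (t \<inter> F)) \<le> (card F choose 2) + 3 * card T"
    using linear_hypergraph_subset[OF linear_triples] card_triple fT fF
    by (intro linear_triples_incidence_bound) (auto simp: T_def)
  ultimately show False using pairs_F card_T by linarith
qed

lemma card_alpha_at_eq_4: "card {x\<in>V. alpha_at D x = 4} = 7"
proof -
  have "(\<Sum>x\<in>V. alpha_at D x - 1) = (\<Sum>x\<in>{x\<in>V. alpha_at D x = 4}. alpha_at D x - 1)"
    using alpha_at_cases alpha_at_ne_7 by (intro sum.mono_neutral_right[OF finite_V]) force+
  then show ?thesis using sum_alpha_at_minus_one by simp
qed

lemma two_triples_in_alpha_at_eq_4:
  "2 \<le> card {t\<in>triples D. t \<subseteq> {x\<in>V. alpha_at D x = 4}}"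
proof -
  let ?W = "{x\<in>V. alpha_at D x = 4}"
  have "28 = (\<Sum>x\<in>?W. alpha_at D x)" using card_alpha_at_eq_4 by simp
  also have "\<dots> = (\<Sum>t\<in>triples D. card (t \<inter> ?W))"
    using finite_V by (intro sum_alpha_at_eq_sum_card_Int finite_D) simp
  also have "\<dots> \<le> 2 * alpha D + card {t\<in>triples D. t \<subseteq> ?W}"
    unfolding alpha_def by (rule sum_card_Int_triples_le[OF finite_triples card_triple])
  finally show ?thesis using alpha_D by simp
qed

end

theorem mainTheorem10:
  fixes V :: "'a set" and D :: "'a set set"
  assumes "finite V" and "card V = 18"
    and "K34_decomposition V D"
    and "alpha D = 13"
  shows "\<exists>W. W \<subseteq> V \<and> card W = 7 \<and> (\<forall>w\<in>W. alpha_at D w = 4) \<and>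
             card {B \<in> triples D. B \<subseteq> W} \<ge> 2"
proof -
  interpret K34_decomposition_18_13 V D
    using assms by unfold_locales
  show ?thesis
    using card_alpha_at_eq_4 two_triples_in_alpha_at_eq_4
    by (intro exI[of _ "{x\<in>V. alpha_at D x = 4}"]) auto
qed

end
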